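(* Let $S=\{h_{\bm s}: \bm s\in\{\pm e_i,\ \pm e_j\pm e_k \mid 1\le i\le N,\ 1\le j<k\le N\}\}\subset\mathcal{H}_N$, let $\langle S\rangle$ be the Lie subalgebra of $\mathcal{H}_N$ generated by $S$, and let $L_S=\{\bm r\in\mathbb{Z}^N : h_{\bm r}\in\langle S\rangle\}$. Then $L_S=\mathbb{Z}^N$.
   Context: $\mathbb{K}$ is an algebraically closed field of characteristic zero, $N=2m\ge2$ even, $e_1,\dots,e_N$ the standard basis of $\mathbb{Z}^N\subset\mathbb{K}^N$, $(\cdot,\cdot)$ the bilinear form with $(e_i,e_j)=\delta_{ij}$. Let $A_N=\mathbb{K}[t_1^{\pm1},\dots,t_N^{\pm1}]$, $d_i=t_i\frac{\partial}{\partial t_i}$, $t^{\bm r}=t_1^{r_1}\cdots t_N^{r_N}$, $D(u,\bm r)=\sum_i u_it^{\bm r}d_i$. Let $\bm J=\begin{pmatrix} O_m & I_m\\ -I_m & O_m\end{pmatrix}$, $\overline{\bm r}=\bm J\bm r$, $h_{\bm r}=D(\overline{\bm r},\bm r)$ (so $h_{\bm 0}=0$). The Hamiltonian Lie algebra is $\mathcal{H}_N=\operatorname{span}_{\mathbb{K}}\{h_{\bm r}:\bm r\ne\bm0\}\oplus\operatorname{span}_{\mathbb{K}}\{d_1,\dots,d_N\}$ with commutator bracket; $[h_{\bm r},h_{\bm s}]=(\overline{\bm r},\bm s)h_{\bm r+\bm s}$. *)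

theory Defs
  imports "HOL-Computational_Algebra.Polynomial"
begin

text \<open>Lattice vectors in Z^N are modelled as functions nat => int vanishing outside
  the index range {0..<N} (indices are 0-based: e_i with i < N).\<close>

definition zvec :: "nat \<Rightarrow> (nat \<Rightarrow> int) \<Rightarrow> bool" where
  "zvec N r \<longleftrightarrow> (\<forall>i\<ge>N. r i = 0)"

definition evec :: "nat \<Rightarrow> nat \<Rightarrow> int" where
  "evec i = (\<lambda>j. if j = i then 1 else 0)"

text \<open>bar r = J r with J = ((O, I), (-I, O)) of size N = 2m.\<close>
definition Jbar :: "nat \<Rightarrow> (nat \<Rightarrow> int) \<Rightarrow> (nat \<Rightarrow> int)" where
  "Jbar m r = (\<lambda>i. if i < m then r (i + m) else if i < 2*m then - r (i - m) else 0)"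

definition ip :: "nat \<Rightarrow> (nat \<Rightarrow> int) \<Rightarrow> (nat \<Rightarrow> int) \<Rightarrow> int" where
  "ip N r s = (\<Sum>i<N. r i * s i)"

text \<open>Elements of the Hamiltonian Lie algebra H_N, N = 2m: a pair (f, u) standing for
  sum_{r \<noteq> 0} f(r) h_r + sum_i u(i) d_i, with f finitely supported on Z^N \ {0}.\<close>
type_synonym 'k ham = "((nat \<Rightarrow> int) \<Rightarrow> 'k) \<times> (nat \<Rightarrow> 'k)"

definition Ham :: "nat \<Rightarrow> 'k::field ham set" where
  "Ham m = {(f, u). finite {r. f r \<noteq> 0} \<and> (\<forall>r. f r \<noteq> 0 \<longrightarrow> zvec (2*m) r \<and> r \<noteq> (\<lambda>_. 0))
              \<and> (\<forall>i\<ge>2*m. u i = 0)}"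

definition ham_zero :: "'k::field ham" where
  "ham_zero = ((\<lambda>_. 0), (\<lambda>_. 0))"

definition ham_add :: "'k::field ham \<Rightarrow> 'k ham \<Rightarrow> 'k ham" where
  "ham_add x y = ((\<lambda>r. fst x r + fst y r), (\<lambda>i. snd x i + snd y i))"

definition ham_smult :: "'k::field \<Rightarrow> 'k ham \<Rightarrow> 'k ham" where
  "ham_smult c x = ((\<lambda>r. c * fst x r), (\<lambda>i. c * snd x i))"

text \<open>Basis element h_r = D(bar r, r) (with h_0 = 0).\<close>
definition hvec :: "(nat \<Rightarrow> int) \<Rightarrow> 'k::field ham" where
  "hvec r = ((\<lambda>s. if s = r \<and> r \<noteq> (\<lambda>_. 0) then 1 else 0), (\<lambda>_. 0))"

text \<open>The commutator bracket:
  [h_r, h_s] = (bar r, s) h_{r+s},  [d_i, h_r] = r_i h_r,  [d_i, d_j] = 0,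
  extended bilinearly.\<close>
definition ham_bracket :: "nat \<Rightarrow> 'k::field ham \<Rightarrow> 'k ham \<Rightarrow> 'k ham" where
  "ham_bracket m x y =
     ((\<lambda>r. if r = (\<lambda>_. 0) then 0 else
            (\<Sum>s\<in>{s. fst x s \<noteq> 0}. fst x s * fst y (\<lambda>i. r i - s i)
                 * of_int (ip (2*m) (Jbar m s) (\<lambda>i. r i - s i)))
          + (\<Sum>i<2*m. snd x i * of_int (r i)) * fst y r
          - (\<Sum>i<2*m. snd y i * of_int (r i)) * fst x r),
      (\<lambda>_. 0))"

inductive_set lie_gen :: "nat \<Rightarrow> 'k::field ham set \<Rightarrow> 'k ham set" for m S where
  base: "x \<in> S \<Longrightarrow> x \<in> lie_gen m S"
| zero: "ham_zero \<in> lie_gen m S"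
| add: "x \<in> lie_gen m S \<Longrightarrow> y \<in> lie_gen m S \<Longrightarrow> ham_add x y \<in> lie_gen m S"
| smult: "x \<in> lie_gen m S \<Longrightarrow> ham_smult c x \<in> lie_gen m S"
| bracket: "x \<in> lie_gen m S \<Longrightarrow> y \<in> lie_gen m S \<Longrightarrow> ham_bracket m x y \<in> lie_gen m S"

definition Svecs :: "nat \<Rightarrow> (nat \<Rightarrow> int) set" where
  "Svecs N = {evec i | i. i < N} \<union> {(\<lambda>l. - evec i l) | i. i < N}
     \<union> {(\<lambda>l. a * evec j l + b * evec k l) | j k a b. j < k \<and> k < N \<and> a \<in> {1, -1} \<and> b \<in> {1, -1}}"

definition Sgen :: "nat \<Rightarrow> 'k::field ham set" where
  "Sgen m = hvec ` Svecs (2*m)"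

definition L_S :: "nat \<Rightarrow> 'k::field itself \<Rightarrow> (nat \<Rightarrow> int) set" where
  "L_S m _ = {r. zvec (2*m) r \<and> (hvec r :: 'k ham) \<in> lie_gen m (Sgen m)}"

end

theory Submission
  imports Defs
begin

text \<open>Since [h_s, h_t] = (bar s, t) h_{s+t} and (bar t, t) = 0, the element h_r lies in the
  generated subalgebra as soon as h_{r-t} does for some generator index t with (bar r, t) \<noteq> 0.
  Call coordinates p and p \<plusminus> m partners; bar r is r with partners swapped (up to sign).
  Induct on the l1-norm of r. If r is nonzero at two partner coordinates p, p', then
  t = \<plusminus>e_p lowers the norm. Otherwise, unless r = \<plusminus>e_j, pick nonzero coordinates r_j, r_k
  (j = k allowed if |r_j| \<ge> 2) and subtract t = \<plusminus>e_j + e_k' with k' the partner of k: the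
  norm is unchanged, but r - t is now nonzero at the partners k and k'.\<close>

lemma hvec_zero: "hvec (\<lambda>_. 0) = (ham_zero :: 'k::field ham)"
  by (simp add: hvec_def ham_zero_def)

lemma ham_bracket_hvec:
  fixes s t :: "nat \<Rightarrow> int"
  assumes s0: "s \<noteq> (\<lambda>_. 0)" and t0: "t \<noteq> (\<lambda>_. 0)"
  shows "ham_bracket m (hvec s) (hvec t)
    = ham_smult (of_int (ip (2*m) (Jbar m s) t)) (hvec (\<lambda>i. s i + t i) :: 'k::field ham)"
proof -
  have supp: "{s'. fst (hvec s :: 'k ham) s' \<noteq> 0} = {s}"
    using s0 by (auto simp: hvec_def)
  have shift: "(\<lambda>i. r i - s i) = t \<longleftrightarrow> r = (\<lambda>i. s i + t i)" for r
    by (auto simp: fun_eq_iff algebra_simps)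
  show ?thesis
    unfolding ham_bracket_def ham_smult_def
    by (simp only: supp prod_eq_iff fst_conv snd_conv) (auto simp: hvec_def shift s0 t0)
qed

lemma lie_gen_hvec_add:
  fixes s t :: "nat \<Rightarrow> int"
  assumes "(hvec s :: 'k::field_char_0 ham) \<in> lie_gen m S" "(hvec t :: 'k ham) \<in> lie_gen m S"
    and "ip (2*m) (Jbar m s) t \<noteq> 0"
  shows "(hvec (\<lambda>i. s i + t i) :: 'k ham) \<in> lie_gen m S"
proof -
  have "Jbar m (\<lambda>_. 0) = (\<lambda>_. 0)"
    by (simp add: Jbar_def fun_eq_iff)
  then have "s \<noteq> (\<lambda>_. 0)" "t \<noteq> (\<lambda>_. 0)"
    using assms(3) by (auto simp: ip_def)
  then have "ham_bracket m (hvec s) (hvec t)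
      = ham_smult (of_int (ip (2*m) (Jbar m s) t)) (hvec (\<lambda>i. s i + t i) :: 'k ham)"
    by (rule ham_bracket_hvec)
  then have "hvec (\<lambda>i. s i + t i)
      = ham_smult (1 / of_int (ip (2*m) (Jbar m s) t)) (ham_bracket m (hvec s) (hvec t) :: 'k ham)"
    using assms(3) by (simp add: ham_smult_def)
  also have "\<dots> \<in> lie_gen m S"
    by (intro lie_gen.smult lie_gen.bracket assms(1,2))
  finally show ?thesis .
qed

lemma ip_Jbar_self: "ip (2*m) (Jbar m t) t = 0"
proof -
  have split: "(\<Sum>i<2*m. f i) = (\<Sum>i<m. f i) + (\<Sum>i<m. f (i + m))" for f :: "nat \<Rightarrow> int"
  proof -
    have "(\<Sum>i<m+n. f i) = (\<Sum>i<m. f i) + (\<Sum>i<n. f (i + m))" for n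
      by (induction n) (auto simp: add_ac)
    then show ?thesis by (simp add: mult_2)
  qed
  have "ip (2*m) (Jbar m t) t = (\<Sum>i<m. t (i + m) * t i) + (\<Sum>i<m. - t i * t (i + m))"
    unfolding ip_def split by (auto simp: Jbar_def intro!: sum.cong arg_cong2[where f="(+)"])
  also have "\<dots> = 0"
    by (simp add: sum_negf mult.commute)
  finally show ?thesis .
qed

lemma Jbar_diff: "Jbar m (\<lambda>i. r i - t i) = (\<lambda>i. Jbar m r i - Jbar m t i)"
  by (auto simp: Jbar_def)

lemma ip_diff_left: "ip N (\<lambda>i. f i - g i) t = ip N f t - ip N g t"
  by (simp add: ip_def left_diff_distrib sum_subtractf)

lemma ip_evec: "k < N \<Longrightarrow> ip N r (evec k) = r k"
  by (simp add: ip_def evec_def if_distrib cong: if_cong)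

lemma ip_smult_evec: "j < N \<Longrightarrow> ip N r (\<lambda>l. a * evec j l) = a * r j"
  by (simp add: ip_def sum_distrib_left mult.left_commute flip: ip_evec[of j N r])

lemma ip_lincomb_evec:
  "j < N \<Longrightarrow> k < N \<Longrightarrow> ip N r (\<lambda>l. a * evec j l + b * evec k l) = a * r j + b * r k"
  by (simp add: ip_def distrib_left sum.distrib flip: ip_smult_evec)

lemma evec_smult_in_Svecs: "\<sigma> \<in> {1, -1} \<Longrightarrow> i < N \<Longrightarrow> (\<lambda>l. \<sigma> * evec i l) \<in> Svecs N"
  unfolding Svecs_def by (auto simp: fun_eq_iff)

lemma evec_lincomb_in_Svecs:
  assumes "j \<noteq> k" "j < N" "k < N" "a \<in> {1, -1}" "b \<in> {1, -1}"
  shows "(\<lambda>l. a * evec j l + b * evec k l) \<in> Svecs N"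
proof (cases "j < k")
  case True
  then show ?thesis using assms unfolding Svecs_def by blast
next
  case False
  then have "k < j" using assms(1) by simp
  moreover have "(\<lambda>l. a * evec j l + b * evec k l) = (\<lambda>l. b * evec k l + a * evec j l)"
    by (simp add: add.commute)
  ultimately show ?thesis using assms unfolding Svecs_def by blast
qed

lemma zvec_Svecs: "t \<in> Svecs N \<Longrightarrow> zvec N t"
  unfolding Svecs_def zvec_def by (auto simp: evec_def)

lemma Svecs_in_L_S: "t \<in> Svecs (2*m) \<Longrightarrow> t \<in> L_S m TYPE('k::field)"
  unfolding L_S_def Sgen_def by (auto intro: lie_gen.base zvec_Svecs)

lemma L_S_diff_Svecs:
  assumes "t \<in> Svecs (2*m)" "zvec (2*m) r" "(\<lambda>i. r i - t i) \<in> L_S m TYPE('k::field_char_0)"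
    and "ip (2*m) (Jbar m r) t \<noteq> 0"
  shows "r \<in> L_S m TYPE('k)"
proof -
  have "ip (2*m) (Jbar m (\<lambda>i. r i - t i)) t \<noteq> 0"
    using assms(4) by (simp add: Jbar_diff ip_diff_left ip_Jbar_self)
  then have "(hvec (\<lambda>i. (r i - t i) + t i) :: 'k ham) \<in> lie_gen m (Sgen m)"
    using assms(1,3) Svecs_in_L_S[OF assms(1), where 'k='k]
    by (intro lie_gen_hvec_add) (auto simp: L_S_def)
  then show ?thesis
    using assms(2) by (simp add: L_S_def)
qed

definition partner :: "nat \<Rightarrow> nat \<Rightarrow> nat" where
  "partner m k = (if k < m then k + m else k - m)"

lemma partner_less: "k < 2*m \<Longrightarrow> partner m k < 2*m"
  by (auto simp: partner_def)

lemma partner_neq: "k < 2*m \<Longrightarrow> partner m k \<noteq> k"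
  by (auto simp: partner_def)

lemma partner_partner: "k < 2*m \<Longrightarrow> partner m (partner m k) = k"
  by (auto simp: partner_def)

lemma Jbar_eq_0_iff: "k < 2*m \<Longrightarrow> Jbar m r k = 0 \<longleftrightarrow> r (partner m k) = 0"
  by (auto simp: Jbar_def partner_def)

definition has_full_pair :: "nat \<Rightarrow> (nat \<Rightarrow> int) \<Rightarrow> bool" where
  "has_full_pair m r \<longleftrightarrow> (\<exists>p<2*m. r p \<noteq> 0 \<and> r (partner m p) \<noteq> 0)"

definition l1_norm :: "nat \<Rightarrow> (nat \<Rightarrow> int) \<Rightarrow> nat" where
  "l1_norm N r = (\<Sum>i<N. nat \<bar>r i\<bar>)"

lemma l1_norm_upd:
  assumes "j < N"
  shows "l1_norm N (r(j := x)) + nat \<bar>r j\<bar> = l1_norm N r + nat \<bar>x\<bar>"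
proof -
  have "l1_norm N f = nat \<bar>f j\<bar> + (\<Sum>i\<in>{..<N}-{j}. nat \<bar>f i\<bar>)" for f
    unfolding l1_norm_def using assms by (simp add: sum.remove)
  then show ?thesis by simp
qed

lemma nat_abs_sub_sgn: "(x::int) \<noteq> 0 \<Longrightarrow> nat \<bar>x - sgn x\<bar> + 1 = nat \<bar>x\<bar>"
  by (cases "x > 0") (auto simp: sgn_if)

lemma sgn_nonzero_cases: "(x::int) \<noteq> 0 \<Longrightarrow> sgn x \<in> {1, -1}"
  by (auto simp: sgn_if)

lemma L_S_if_full_pair:
  assumes IH: "\<And>s. l1_norm (2*m) s < l1_norm (2*m) r \<Longrightarrow> zvec (2*m) s \<Longrightarrow> s \<in> L_S m TYPE('k)"
    and r: "zvec (2*m) r" "has_full_pair m r"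
  shows "r \<in> L_S m TYPE('k::field_char_0)"
proof -
  obtain p where p: "p < 2*m" "r p \<noteq> 0" "r (partner m p) \<noteq> 0"
    using r(2) by (auto simp: has_full_pair_def)
  define t where "t = (\<lambda>l. sgn (r p) * evec p l)"
  have t: "t \<in> Svecs (2*m)"
    unfolding t_def using p by (intro evec_smult_in_Svecs sgn_nonzero_cases)
  have diff: "(\<lambda>i. r i - t i) = r(p := r p - sgn (r p))"
    by (auto simp: t_def evec_def)
  have "l1_norm (2*m) (r(p := r p - sgn (r p))) < l1_norm (2*m) r"
    using l1_norm_upd[OF p(1), of r "r p - sgn (r p)"] nat_abs_sub_sgn[OF p(2)] by simp
  moreover have "zvec (2*m) (r(p := r p - sgn (r p)))"
    using r(1) p(1) by (simp add: zvec_def)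
  ultimately have "(\<lambda>i. r i - t i) \<in> L_S m TYPE('k)"
    unfolding diff by (rule IH)
  moreover have "ip (2*m) (Jbar m r) t \<noteq> 0"
    using p by (simp add: t_def ip_smult_evec Jbar_eq_0_iff sgn_if)
  ultimately show ?thesis
    using L_S_diff_Svecs[OF t r(1)] by blast
qed

lemma L_S_if_no_full_pair:
  assumes IH: "\<And>s. l1_norm (2*m) s = l1_norm (2*m) r \<Longrightarrow> zvec (2*m) s \<Longrightarrow> has_full_pair m s
      \<Longrightarrow> s \<in> L_S m TYPE('k)"
    and r: "zvec (2*m) r" "\<not> has_full_pair m r"
  shows "r \<in> L_S m TYPE('k::field_char_0)"
proof (cases "r = (\<lambda>_. 0)")
  case True
  then show ?thesis by (simp add: L_S_def zvec_def hvec_zero lie_gen.zero)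
next
  case False
  then obtain j where j: "r j \<noteq> 0" by auto
  have j_less: "j < 2*m"
    using r(1) j by (meson not_less zvec_def)
  show ?thesis
  proof (cases "\<exists>k. (k \<noteq> j \<or> 2 \<le> \<bar>r j\<bar>) \<and> r k \<noteq> 0")
    case False
    then have "r = (\<lambda>l. sgn (r j) * evec j l)"
      using j by (auto simp: fun_eq_iff evec_def sgn_if)
    then show ?thesis
      using j j_less by (metis Svecs_in_L_S evec_smult_in_Svecs sgn_nonzero_cases)
  next
    case True
    then obtain k where k: "k \<noteq> j \<or> 2 \<le> \<bar>r j\<bar>" "r k \<noteq> 0" by blast
    have k_less: "k < 2*m"
      using r(1) k(2) by (meson not_less zvec_def)
    define k' where "k' = partner m k"
    have k': "k' < 2*m" "k' \<noteq> k" "r k' = 0"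
      using r(2) k(2) k_less partner_less partner_neq
      by (auto simp: k'_def has_full_pair_def)
    have "j \<noteq> k'" using j k' by auto
    define t where "t = (\<lambda>l. sgn (r j) * evec j l + 1 * evec k' l)"
    have t: "t \<in> Svecs (2*m)"
      unfolding t_def using \<open>j \<noteq> k'\<close> j_less k' j
      by (intro evec_lincomb_in_Svecs sgn_nonzero_cases) auto
    define s where "s = r(j := r j - sgn (r j), k' := -1)"
    have diff: "(\<lambda>i. r i - t i) = s"
      using \<open>j \<noteq> k'\<close> k'(3) by (auto simp: s_def t_def evec_def)
    have "s k \<noteq> 0" "s k' = -1"
      using k k'(2) by (auto simp: s_def sgn_if)
    then have "has_full_pair m s"
      using k_less unfolding has_full_pair_def k'_def by auto
    moreover have "l1_norm (2*m) s = l1_norm (2*m) r"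
      using l1_norm_upd[OF j_less, of r "r j - sgn (r j)"]
        l1_norm_upd[OF k'(1), of "r(j := r j - sgn (r j))" "-1"]
        nat_abs_sub_sgn[OF j] \<open>j \<noteq> k'\<close> k'(3)
      by (simp add: s_def)
    moreover have "zvec (2*m) s"
      using r(1) j_less k'(1) by (simp add: s_def zvec_def)
    ultimately have "(\<lambda>i. r i - t i) \<in> L_S m TYPE('k)"
      unfolding diff by (intro IH)
    moreover have "Jbar m r j = 0" "Jbar m r k' \<noteq> 0"
      using r(2) j j_less k(2) k_less k'(1)
      by (auto simp: Jbar_eq_0_iff has_full_pair_def k'_def partner_partner)
    then have "ip (2*m) (Jbar m r) t \<noteq> 0"
      unfolding t_def ip_lincomb_evec[OF j_less k'(1)] by simp
    ultimately show ?thesis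
      using L_S_diff_Svecs[OF t r(1)] by blast
  qed
qed

lemma zvec_in_L_S: "zvec (2*m) r \<Longrightarrow> r \<in> L_S m TYPE('k::field_char_0)"
proof (induction "l1_norm (2*m) r" arbitrary: r rule: less_induct)
  case less
  have full: "s \<in> L_S m TYPE('k)"
    if "l1_norm (2*m) s = l1_norm (2*m) r" "zvec (2*m) s" "has_full_pair m s" for s
    by (rule L_S_if_full_pair[OF _ that(2,3)]) (use less.hyps that(1) in simp)
  show ?case
  proof (cases "has_full_pair m r")
    case True
    then show ?thesis using full less.prems by blast
  next
    case False
    then show ?thesis using L_S_if_no_full_pair[OF full less.prems] by blast
  qed
qed

theorem proposition2p3:
  fixes m :: nat
  assumes "m \<ge> 1"
    and "\<forall>p :: 'k::field_char_0 poly. degree p > 0 \<longrightarrow> (\<exists>x. poly p x = 0)"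
  shows "L_S m TYPE('k) = {r. zvec (2*m) r}"
  using zvec_in_L_S by (auto simp: L_S_def)

end
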